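(* Let $p$ be an odd prime and $q\in\mathbb C_p$ with $|1-q|_p<p^{-1/(p-1)}$. For $k,n\in\mathbb Z_+$ with $n\ge k$, $$\int_{\mathbb Z_p}\frac{B_{k,n}(x,q)}{\binom nk}\,d\mu_{-1}(x)=\sum_{m=0}^\infty\sum_{l=0}^{n-k}\binom{l+m-1}{m}\binom{n-k}{l}(-1)^{l+m}q^l(q-1)^mE_{l+m+k,q}.$$
   Context: For $x\in\mathbb Z_p$, $[x]_q=\frac{1-q^x}{1-q}$. The modified $q$-Bernstein polynomials are $B_{k,n}(x,q)=\binom nk[x]_q^k[1-x]_q^{n-k}$ for $0\le k\le n$. The fermionic $p$-adic integral of a uniformly differentiable $f:\mathbb Z_p\to\mathbb C_p$ is $\int_{\mathbb Z_p}f(x)\,d\mu_{-1}(x)=\lim_{N\to\infty}\sum_{x=0}^{p^N-1}f(x)(-1)^x$. The $q$-Euler numbers are $E_{n,q}=\int_{\mathbb Z_p}[x]_q^n\,d\mu_{-1}(x)$. Binomial coefficients $\binom{a}{m}=\frac{a(a-1)\cdots(a-m+1)}{m!}$ are the generalized ones (so $\binom{-1}{0}=1$ and $\binom{m-1}{m}=0$ for $m\ge1$). *)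

theory Defs
  imports Complex_Main "HOL-Computational_Algebra.Primes"
begin

text \<open>Abstract model of the ambient field C_p: a field K of characteristic 0
with an absolute value nv that is multiplicative, non-archimedean, complete,
algebraically closed, and normalised by nv p = 1/p (so it restricts to the
p-adic absolute value on Q and K contains Q_p).\<close>

definition nv_tendsto :: "('a::field \<Rightarrow> real) \<Rightarrow> (nat \<Rightarrow> 'a) \<Rightarrow> 'a \<Rightarrow> bool" where
  "nv_tendsto nv X L \<longleftrightarrow> ((\<lambda>N. nv (X N - L)) \<longlonglongrightarrow> 0)"

definition nv_sums :: "('a::field \<Rightarrow> real) \<Rightarrow> (nat \<Rightarrow> 'a) \<Rightarrow> 'a \<Rightarrow> bool" where
  "nv_sums nv g s \<longleftrightarrow> nv_tendsto nv (\<lambda>M. \<Sum>m<M. g m) s"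

definition Cp_like :: "nat \<Rightarrow> ('a::field_char_0 \<Rightarrow> real) \<Rightarrow> bool" where
  "Cp_like p nv \<longleftrightarrow>
     (\<forall>x. 0 \<le> nv x) \<and> (\<forall>x. nv x = 0 \<longleftrightarrow> x = 0) \<and>
     (\<forall>x y. nv (x * y) = nv x * nv y) \<and>
     (\<forall>x y. nv (x + y) \<le> max (nv x) (nv y)) \<and>
     nv (of_nat p) = 1 / real p \<and>
     (\<forall>X. (\<forall>e>0. \<exists>M. \<forall>m\<ge>M. \<forall>n\<ge>M. nv (X m - X n) < e) \<longrightarrow> (\<exists>L. nv_tendsto nv X L)) \<and>
     (\<forall>(d::nat) (c::nat \<Rightarrow> 'a). d > 0 \<longrightarrow> (\<exists>x. x ^ d + (\<Sum>i<d. c i * x ^ i) = 0))"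

definition qint :: "'a::field_char_0 \<Rightarrow> int \<Rightarrow> 'a" where
  "qint q x = (if q = 1 then of_int x else (1 - q powi x) / (1 - q))"

definition qbern :: "nat \<Rightarrow> nat \<Rightarrow> 'a::field_char_0 \<Rightarrow> nat \<Rightarrow> 'a" where
  "qbern k n q x = of_nat (n choose k) * qint q (int x) ^ k * qint q (1 - int x) ^ (n - k)"

definition ferm_exists :: "nat \<Rightarrow> ('a::field \<Rightarrow> real) \<Rightarrow> (nat \<Rightarrow> 'a) \<Rightarrow> bool" where
  "ferm_exists p nv f \<longleftrightarrow> (\<exists>L. nv_tendsto nv (\<lambda>N. \<Sum>x<p ^ N. f x * (-1) ^ x) L)"

definition ferm_int :: "nat \<Rightarrow> ('a::field \<Rightarrow> real) \<Rightarrow> (nat \<Rightarrow> 'a) \<Rightarrow> 'a" where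
  "ferm_int p nv f = (THE L. nv_tendsto nv (\<lambda>N. \<Sum>x<p ^ N. f x * (-1) ^ x) L)"

definition qEuler :: "nat \<Rightarrow> ('a::field_char_0 \<Rightarrow> real) \<Rightarrow> nat \<Rightarrow> 'a \<Rightarrow> 'a" where
  "qEuler p nv j q = ferm_int p nv (\<lambda>x. qint q (int x) ^ j)"

end

theory Submission
  imports Defs
begin

text \<open>For |1 - q| < 1 one has |[p^N i]_q| \<le> max(|p|, |1 - q|)^N, because
  [p a]_q = [a]_q (\<Sum>r<p. q^(a r)) and this sum is \<equiv> p mod 1 - q. As p is odd, consecutive
  fermionic Riemann sums of [x]_q^j therefore differ by a geometrically small amount, so the
  q-Euler numbers exist. Since q^x = 1 - (1 - q)[x]_q and q^x [1 - x]_q = 1 - [x]_q, expanding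
  [1 - x]_q^(n-k) binomially and each q^(-l x) as a negative binomial series in (1 - q)[x]_q writes
  B_{k,n}(x,q) / (n choose k) as a power series in [x]_q whose M-th partial sum is within |1 - q|^M
  of it, uniformly in x; uniform approximation then allows term-by-term integration.\<close>

locale nonarch_abs =
  fixes nv :: "'a::field \<Rightarrow> real"
  assumes nv_nonneg: "0 \<le> nv x"
    and nv_eq_0_iff: "nv x = 0 \<longleftrightarrow> x = 0"
    and nv_mult: "nv (x * y) = nv x * nv y"
    and nv_ultra: "nv (x + y) \<le> max (nv x) (nv y)"
begin

lemma nv_0 [simp]: "nv 0 = 0"
  using nv_eq_0_iff by simp

lemma nv_1 [simp]: "nv 1 = 1"
proof -
  have "nv 1 = nv 1 * nv 1" using nv_mult[of 1 1] by simp
  moreover have "nv 1 \<noteq> 0" using nv_eq_0_iff by simp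
  ultimately show ?thesis by simp
qed

lemma nv_minus_1 [simp]: "nv (-1) = 1"
proof -
  have "nv (-1) * nv (-1) = 1" using nv_mult[of "-1" "-1"] by simp
  then show ?thesis using nv_nonneg[of "-1"] power2_eq_1_iff[of "nv (-1)"] by (auto simp: power2_eq_square)
qed

lemma nv_minus [simp]: "nv (- x) = nv x"
  using nv_mult[of "-1" x] by simp

lemma nv_minus_commute: "nv (x - y) = nv (y - x)"
  by (metis minus_diff_eq nv_minus)

lemma nv_power: "nv (x ^ n) = nv x ^ n"
  by (induction n) (simp_all add: nv_mult)

lemma nv_divide: "nv (x / y) = nv x / nv y"
proof (cases "y = 0")
  case False
  then have "nv x = nv (x / y) * nv y" using nv_mult[of "x / y" y] by simp
  then show ?thesis using False nv_eq_0_iff by (simp add: field_simps)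
qed simp

lemma nv_add_le: "nv x \<le> B \<Longrightarrow> nv y \<le> B \<Longrightarrow> nv (x + y) \<le> B"
  using nv_ultra[of x y] by linarith

lemma nv_diff_le: "nv x \<le> B \<Longrightarrow> nv y \<le> B \<Longrightarrow> nv (x - y) \<le> B"
  using nv_add_le[of x B "- y"] by simp

lemma nv_add_less: "nv x < B \<Longrightarrow> nv y < B \<Longrightarrow> nv (x + y) < B"
  using nv_ultra[of x y] by linarith

lemma nv_diff_less: "nv x < B \<Longrightarrow> nv y < B \<Longrightarrow> nv (x - y) < B"
  using nv_add_less[of x B "- y"] by simp

lemma nv_sum_le: "(\<And>i. i \<in> A \<Longrightarrow> nv (f i) \<le> B) \<Longrightarrow> 0 \<le> B \<Longrightarrow> nv (sum f A) \<le> B"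
  by (induction A rule: infinite_finite_induct) (simp_all add: nv_add_le)

lemma nv_mult_le_one_left: "nv x \<le> 1 \<Longrightarrow> nv y \<le> B \<Longrightarrow> nv (x * y) \<le> B"
  using mult_left_le_one_le[of "nv y" "nv x"] by (simp add: nv_mult nv_nonneg)

lemma nv_mult_le_one_right: "nv x \<le> B \<Longrightarrow> nv y \<le> 1 \<Longrightarrow> nv (x * y) \<le> B"
  using nv_mult_le_one_left[of y x B] by (simp add: mult.commute)

lemma nv_of_nat_le_1: "nv (of_nat n) \<le> 1"
  by (induction n) (simp_all add: nv_add_le)

lemma nv_eq_1_if_nv_diff_1_lt_1:
  assumes "nv (1 - q) < 1"
  shows "nv q = 1"
proof -
  have "nv q \<le> 1" using nv_diff_le[of 1 1 "1 - q"] assms by simp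
  moreover have "1 \<le> max (nv q) (nv (1 - q))" using nv_ultra[of q "1 - q"] by simp
  ultimately show ?thesis using assms by linarith
qed

lemma nv_tendsto_dist_le:
  assumes "nv_tendsto nv X L" "nv_tendsto nv Y L'" "\<And>N. nv (X N - Y N) \<le> c"
  shows "nv (L - L') \<le> c"
proof (rule LIMSEQ_le_const)
  show "(\<lambda>N. c + nv (X N - L) + nv (Y N - L')) \<longlonglongrightarrow> c"
    using tendsto_add[OF tendsto_add[OF tendsto_const assms(1)[unfolded nv_tendsto_def]]
        assms(2)[unfolded nv_tendsto_def]] by simp
  have "nv (L - L') \<le> c + nv (X N - L) + nv (Y N - L')" for N
  proof -
    have "L - L' = (L - X N) + ((X N - Y N) + (Y N - L'))" by simp
    then have "nv (L - L') \<le> max (nv (L - X N)) (max (nv (X N - Y N)) (nv (Y N - L')))"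
      using nv_ultra[of "L - X N"] nv_ultra[of "X N - Y N" "Y N - L'"] by (smt (verit))
    then show ?thesis using assms(3)[of N] nv_nonneg[of "X N - L"] nv_nonneg[of "Y N - L'"]
        nv_nonneg[of "X N - Y N"] nv_minus_commute[of "X N" L] by (smt (verit))
  qed
  then show "\<exists>N0. \<forall>N\<ge>N0. nv (L - L') \<le> c + nv (X N - L) + nv (Y N - L')" by blast
qed

lemma nv_tendsto_unique: "nv_tendsto nv X L \<Longrightarrow> nv_tendsto nv X L' \<Longrightarrow> L = L'"
  using nv_tendsto_dist_le[of X L X L' 0] nv_nonneg[of "L - L'"] nv_eq_0_iff[of "L - L'"] by simp

lemma nv_tendsto_add:
  assumes "nv_tendsto nv X L" "nv_tendsto nv Y L'"
  shows "nv_tendsto nv (\<lambda>N. X N + Y N) (L + L')"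
  unfolding nv_tendsto_def
proof (rule tendsto_sandwich[where f = "\<lambda>_. 0" and h = "\<lambda>N. nv (X N - L) + nv (Y N - L')"])
  have "nv (X N + Y N - (L + L')) \<le> nv (X N - L) + nv (Y N - L')" for N
  proof -
    have "X N + Y N - (L + L') = (X N - L) + (Y N - L')" by simp
    then show ?thesis
      using nv_ultra[of "X N - L" "Y N - L'"] nv_nonneg[of "X N - L"] nv_nonneg[of "Y N - L'"]
      by (smt (verit))
  qed
  then show "\<forall>\<^sub>F N in sequentially. nv (X N + Y N - (L + L')) \<le> nv (X N - L) + nv (Y N - L')"
    by simp
  show "(\<lambda>N. nv (X N - L) + nv (Y N - L')) \<longlonglongrightarrow> 0"
    using tendsto_add[OF assms[unfolded nv_tendsto_def]] by simp
qed (simp_all add: nv_nonneg)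

lemma nv_tendsto_sum:
  "(\<And>i. i \<in> A \<Longrightarrow> nv_tendsto nv (X i) (L i)) \<Longrightarrow> nv_tendsto nv (\<lambda>N. \<Sum>i\<in>A. X i N) (\<Sum>i\<in>A. L i)"
  by (induction A rule: infinite_finite_induct) (simp_all add: nv_tendsto_def nv_tendsto_add[unfolded nv_tendsto_def])

lemma nv_tendsto_mult_left: "nv_tendsto nv X L \<Longrightarrow> nv_tendsto nv (\<lambda>N. c * X N) (c * L)"
  unfolding nv_tendsto_def
  using tendsto_mult[OF tendsto_const[of "nv c"], of "\<lambda>N. nv (X N - L)" 0 sequentially]
  by (simp add: nv_mult flip: right_diff_distrib)

end

locale complete_nonarch_abs = nonarch_abs +
  assumes nv_complete:
    "(\<forall>e>0. \<exists>M. \<forall>m\<ge>M. \<forall>n\<ge>M. nv (X m - X n) < e) \<Longrightarrow> \<exists>L. nv_tendsto nv X L"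
begin

lemma nv_convergent_if_geometric_steps:
  assumes r: "0 \<le> r" "r < 1" and steps: "\<And>N. nv (X (Suc N) - X N) \<le> r ^ N"
  shows "\<exists>L. nv_tendsto nv X L"
proof (rule nv_complete, intro allI impI)
  have tail: "nv (X n - X m) \<le> r ^ m" if "m \<le> n" for m n
    using that
  proof (induction n rule: dec_induct)
    case (step n)
    have "nv (X (Suc n) - X n) \<le> r ^ m"
      using steps[of n] power_decreasing[OF step(1)] r by (meson le_less order.trans)
    then have "nv ((X (Suc n) - X n) + (X n - X m)) \<le> r ^ m"
      using step(3) by (rule nv_add_le)
    then show ?case by simp
  qed (use r in simp)
  fix e :: real assume "e > 0"
  then obtain K where K: "r ^ K < e" using real_arch_pow_inv r by blast
  have "nv (X m - X n) < e" if "K \<le> m" "K \<le> n" for m n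
  proof -
    have "nv (X m - X n) \<le> r ^ min m n"
      using tail[of m n] tail[of n m] nv_minus_commute[of "X m"] by (cases "m \<le> n") auto
    also have "\<dots> \<le> r ^ K" using that r by (intro power_decreasing) auto
    finally show ?thesis using K by linarith
  qed
  then show "\<exists>M. \<forall>m\<ge>M. \<forall>n\<ge>M. nv (X m - X n) < e" by blast
qed

lemma nv_tendsto_uniform_approx:
  assumes lim: "\<And>M. nv_tendsto nv (Y M) (s M)"
    and approx: "\<And>M N. nv (X N - Y M N) \<le> err M"
    and err: "err \<longlonglongrightarrow> 0"
  shows "\<exists>L. nv_tendsto nv X L \<and> nv_tendsto nv s L"
proof -
  have "\<exists>L. nv_tendsto nv X L"
  proof (rule nv_complete, intro allI impI)
    fix e :: real assume e: "e > 0"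
    obtain M where M: "err M < e"
      using order_tendstoD(2)[OF err e] by (auto simp: eventually_sequentially)
    obtain N0 where N0: "\<And>N. N \<ge> N0 \<Longrightarrow> nv (Y M N - s M) < e"
      using order_tendstoD(2)[OF lim[of M, unfolded nv_tendsto_def] e]
      by (auto simp: eventually_sequentially)
    have "nv (X m - X n) < e" if "N0 \<le> m" "N0 \<le> n" for m n
    proof -
      have "nv (((X m - Y M m) + (Y M m - s M)) - ((X n - Y M n) + (Y M n - s M))) < e"
      proof (rule nv_diff_less[OF nv_add_less nv_add_less])
        show "nv (X m - Y M m) < e" "nv (X n - Y M n) < e"
          using approx[of m M] approx[of n M] M by linarith+
        show "nv (Y M m - s M) < e" "nv (Y M n - s M) < e"
          using N0 that by auto
      qed
      then show ?thesis by simp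
    qed
    then show "\<exists>N0. \<forall>m\<ge>N0. \<forall>n\<ge>N0. nv (X m - X n) < e" by blast
  qed
  then obtain L where L: "nv_tendsto nv X L" ..
  have bound: "nv (s M - L) \<le> err M" for M
    by (rule nv_tendsto_dist_le[OF lim L]) (simp add: approx nv_minus_commute[of "Y M _"])
  have "(\<lambda>M. nv (s M - L)) \<longlonglongrightarrow> 0"
  proof (rule tendsto_sandwich[of "\<lambda>_. 0" _ sequentially err])
    show "\<forall>\<^sub>F M in sequentially. 0 \<le> nv (s M - L)" by (simp add: nv_nonneg)
    show "\<forall>\<^sub>F M in sequentially. nv (s M - L) \<le> err M" by (simp add: bound)
  qed (simp_all add: err)
  with L show ?thesis unfolding nv_tendsto_def by blast
qed

end

definition ferm_sum :: "nat \<Rightarrow> nat \<Rightarrow> (nat \<Rightarrow> 'a::comm_ring_1) \<Rightarrow> 'a" where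
  "ferm_sum p N f = (\<Sum>x<p ^ N. f x * (-1) ^ x)"

lemma ferm_exists_iff: "ferm_exists p nv f \<longleftrightarrow> (\<exists>L. nv_tendsto nv (\<lambda>N. ferm_sum p N f) L)"
  unfolding ferm_exists_def ferm_sum_def ..

lemma (in nonarch_abs) ferm_int_eqI:
  "nv_tendsto nv (\<lambda>N. ferm_sum p N f) L \<Longrightarrow> ferm_int p nv f = L"
  unfolding ferm_int_def ferm_sum_def by (rule the_equality) (auto intro: nv_tendsto_unique)

lemma ferm_sum_sum: "ferm_sum p N (\<lambda>x. \<Sum>i\<in>A. g i x) = (\<Sum>i\<in>A. ferm_sum p N (g i))"
  unfolding ferm_sum_def sum_distrib_right by (rule sum.swap)

lemma ferm_sum_mult_left: "ferm_sum p N (\<lambda>x. c * f x) = c * ferm_sum p N f"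
  unfolding ferm_sum_def by (simp add: sum_distrib_left mult.assoc)

lemma ferm_sum_diff: "ferm_sum p N f - ferm_sum p N g = ferm_sum p N (\<lambda>x. f x - g x)"
  unfolding ferm_sum_def by (simp add: sum_subtractf left_diff_distrib)

lemma alternating_sum_odd: "odd m \<Longrightarrow> (\<Sum>i<m. (-1::'a::comm_ring_1) ^ i) = 1"
  by (induction m rule: nat_induct2) auto

lemma ferm_sum_Suc:
  assumes "odd p"
  shows "ferm_sum p (Suc N) f = (\<Sum>i<p. \<Sum>y<p ^ N. f (y + p ^ N * i) * (-1) ^ i * (-1) ^ y)"
proof -
  have "ferm_sum p (Suc N) f = (\<Sum>i<p. \<Sum>x\<in>{i * p ^ N..<i * p ^ N + p ^ N}. f x * (-1) ^ x)"
    unfolding ferm_sum_def using sum.nat_group[of "\<lambda>x. f x * (-1) ^ x" "p ^ N" p]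
    by (simp add: mult.commute)
  also have "\<dots> = (\<Sum>i<p. \<Sum>y<p ^ N. f (y + p ^ N * i) * (-1) ^ i * (-1) ^ y)"
  proof (rule sum.cong[OF refl])
    fix i
    have "(\<Sum>x\<in>{i * p ^ N..<i * p ^ N + p ^ N}. f x * (-1) ^ x)
        = (\<Sum>y\<in>{0..<p ^ N}. f (y + i * p ^ N) * (-1) ^ (y + i * p ^ N))"
      using sum.shift_bounds_nat_ivl[of "\<lambda>x. f x * (-1) ^ x" 0 "i * p ^ N" "p ^ N"]
      by (simp add: add.commute)
    also have "\<dots> = (\<Sum>y<p ^ N. f (y + p ^ N * i) * (-1) ^ i * (-1) ^ y)"
    proof (rule sum.cong)
      fix y
      have "(-1::'a) ^ (y + i * p ^ N) = (-1) ^ y * ((-1) ^ (p ^ N)) ^ i"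
        by (simp only: power_add mult.commute[of i] power_mult)
      also have "\<dots> = (-1) ^ i * (-1) ^ y" using assms by simp
      finally show "f (y + i * p ^ N) * (-1) ^ (y + i * p ^ N) = f (y + p ^ N * i) * (-1) ^ i * (-1) ^ y"
        by (simp add: mult.commute mult.left_commute)
    qed (auto simp: atLeast0LessThan)
    finally show "(\<Sum>x\<in>{i * p ^ N..<i * p ^ N + p ^ N}. f x * (-1) ^ x)
        = (\<Sum>y<p ^ N. f (y + p ^ N * i) * (-1) ^ i * (-1) ^ y)" .
  qed
  finally show ?thesis .
qed

text \<open>Oddness of p gives (-1)^(x + p^N i) = (-1)^x (-1)^i and (\<Sum>i<p. (-1)^i) = 1.\<close>
lemma ferm_sum_Suc_diff:
  assumes "odd p"
  shows "ferm_sum p (Suc N) f - ferm_sum p N f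
    = (\<Sum>i<p. \<Sum>y<p ^ N. (f (y + p ^ N * i) - f y) * (-1) ^ i * (-1) ^ y)"
proof -
  have "ferm_sum p N f = (\<Sum>i<p. (-1) ^ i) * ferm_sum p N f"
    by (simp only: alternating_sum_odd[OF assms] mult_1_left)
  also have "\<dots> = (\<Sum>i<p. \<Sum>y<p ^ N. f y * (-1) ^ i * (-1) ^ y)"
    unfolding ferm_sum_def sum_distrib_right by (simp add: sum_distrib_left mult_ac)
  finally show ?thesis
    unfolding ferm_sum_Suc[OF assms] by (simp add: sum_subtractf[symmetric] algebra_simps)
qed

lemma (in nonarch_abs) ferm_sum_Suc_diff_le:
  assumes "odd p" "0 \<le> B" "\<And>y i. i < p \<Longrightarrow> nv (f (y + p ^ N * i) - f y) \<le> B"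
  shows "nv (ferm_sum p (Suc N) f - ferm_sum p N f) \<le> B"
  unfolding ferm_sum_Suc_diff[OF assms(1)] using assms(2,3)
  by (intro nv_sum_le) (simp_all add: nv_mult nv_power)

definition qnat :: "'a::field_char_0 \<Rightarrow> nat \<Rightarrow> 'a" where
  "qnat q x = qint q (int x)"

lemma qnat_0 [simp]: "qnat q 0 = 0" and qnat_Suc_0 [simp]: "qnat q (Suc 0) = 1"
  by (simp_all add: qnat_def qint_def)

lemma one_minus_q_mult_qnat: "(1 - q) * qnat q a = 1 - q ^ a"
  by (cases "q = 1") (simp_all add: qnat_def qint_def)

lemma qnat_add: "qnat q (a + b) = qnat q a + q ^ a * qnat q b"
proof (cases "q = 1")
  case False
  then have "1 - q \<noteq> 0" by simp
  then show ?thesis using False by (simp add: qnat_def qint_def field_simps power_add flip: of_nat_add)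
qed (simp add: qnat_def qint_def)

lemma qnat_mult: "qnat q (a * b) = qnat q a * (\<Sum>r<b. q ^ (a * r))"
proof (induction b)
  case (Suc b)
  have "qnat q (a * Suc b) = qnat q (a * b) + q ^ (a * b) * qnat q a"
    using qnat_add[of q "a * b" a] by (simp add: add.commute)
  then show ?case using Suc by (simp add: algebra_simps)
qed simp

lemma qint_one_minus:
  assumes "q \<noteq> 0"
  shows "qint q (1 - int x) = 1 + (- q * qnat q x) / q ^ x"
proof (cases "q = 1")
  case False
  have "q powi (1 - int x) = q / q ^ x" using assms by (simp add: power_int_diff)
  moreover have "1 - q \<noteq> 0" using False by simp
  ultimately show ?thesis using assms False by (simp add: qnat_def qint_def field_simps)
qed (simp add: qnat_def qint_def)

locale q_fermionic = complete_nonarch_abs nv for nv :: "'a::field_char_0 \<Rightarrow> real" +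
  fixes p :: nat and q :: 'a
  assumes p_odd: "odd p" and nv_p_lt_1: "nv (of_nat p) < 1" and nv_1_minus_q_lt_1: "nv (1 - q) < 1"
begin

lemma nv_q: "nv q = 1"
  using nv_1_minus_q_lt_1 by (rule nv_eq_1_if_nv_diff_1_lt_1)

lemma nv_qnat: "nv (qnat q a) \<le> 1"
proof (induction a)
  case (Suc a)
  have "qnat q (Suc a) = qnat q a + q ^ a * qnat q 1" using qnat_add[of q a 1] by simp
  also have "nv \<dots> \<le> 1"
    using Suc nv_q by (intro nv_add_le) (simp_all add: nv_mult nv_power)
  finally show ?case .
qed simp

lemma nv_power_minus_1_le: "nv (q ^ m - 1) \<le> nv (1 - q)"
proof -
  have "q ^ m - 1 = - ((1 - q) * qnat q m)" using one_minus_q_mult_qnat[of q m] by simp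
  then show ?thesis using nv_qnat nv_mult_le_one_left[of "qnat q m" "1 - q"]
    by (simp add: mult.commute)
qed

definition rho :: real where
  "rho = max (nv (of_nat p)) (nv (1 - q))"

lemma rho_nonneg: "0 \<le> rho"
  unfolding rho_def by (simp add: nv_nonneg le_max_iff_disj)

lemma rho_lt_1: "rho < 1"
  unfolding rho_def using nv_p_lt_1 nv_1_minus_q_lt_1 by simp

lemma nv_sum_power_le_rho: "nv (\<Sum>r<p. q ^ (a * r)) \<le> rho"
proof -
  have "(\<Sum>r<p. q ^ (a * r)) = of_nat p + (\<Sum>r<p. q ^ (a * r) - 1)"
    by (simp add: sum_subtractf)
  also have "nv \<dots> \<le> rho"
  proof (rule nv_add_le)
    show "nv (of_nat p) \<le> rho" unfolding rho_def by simp
    have "nv (q ^ (a * r) - 1) \<le> rho" for r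
      using nv_power_minus_1_le[of "a * r"] unfolding rho_def by simp
    then show "nv (\<Sum>r<p. q ^ (a * r) - 1) \<le> rho"
      using rho_nonneg by (intro nv_sum_le)
  qed
  finally show ?thesis .
qed

lemma nv_qnat_p_power: "nv (qnat q (p ^ N)) \<le> rho ^ N"
proof (induction N)
  case (Suc N)
  have "nv (qnat q (p ^ Suc N)) = nv (qnat q (p ^ N)) * nv (\<Sum>r<p. q ^ (p ^ N * r))"
    using qnat_mult[of q "p ^ N" p] by (simp add: nv_mult mult.commute)
  also have "\<dots> \<le> rho ^ N * rho"
    using Suc nv_sum_power_le_rho rho_nonneg by (intro mult_mono) (simp_all add: nv_nonneg)
  finally show ?case by (simp add: mult.commute)
qed simp

lemma nv_qnat_p_power_mult: "nv (qnat q (p ^ N * i)) \<le> rho ^ N"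
proof -
  have "nv (\<Sum>r<i. q ^ (p ^ N * r)) \<le> 1"
    using nv_q by (intro nv_sum_le) (simp_all add: nv_power)
  then show ?thesis
    using qnat_mult[of q "p ^ N" i] nv_qnat_p_power[of N] by (simp add: nv_mult_le_one_right)
qed

lemma qEuler_limit: "nv_tendsto nv (\<lambda>N. ferm_sum p N (\<lambda>x. qnat q x ^ j)) (qEuler p nv j q)"
proof -
  have "nv (qnat q (y + p ^ N * i) ^ j - qnat q y ^ j) \<le> rho ^ N" for N y i
  proof -
    let ?a = "qnat q (y + p ^ N * i)" and ?b = "qnat q y"
    have "?a ^ j - ?b ^ j = (?a - ?b) * (\<Sum>r<j. ?b ^ (j - Suc r) * ?a ^ r)"
      by (rule power_diff_sumr2)
    moreover have "nv (\<Sum>r<j. ?b ^ (j - Suc r) * ?a ^ r) \<le> 1"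
      using nv_qnat by (intro nv_sum_le) (simp_all add: nv_mult nv_power mult_le_one power_le_one nv_nonneg del: of_nat_add)
    moreover have "nv (?a - ?b) \<le> rho ^ N"
      using nv_qnat_p_power_mult nv_q by (simp add: qnat_add nv_mult nv_power)
    ultimately show ?thesis by (simp add: nv_mult_le_one_right)
  qed
  then have "\<exists>L. nv_tendsto nv (\<lambda>N. ferm_sum p N (\<lambda>x. qnat q x ^ j)) L"
    using rho_nonneg rho_lt_1 p_odd
    by (intro nv_convergent_if_geometric_steps[of rho] ferm_sum_Suc_diff_le) simp_all
  then show ?thesis unfolding qEuler_def qnat_def using ferm_int_eqI by blast
qed

end

definition neg_binomial_partial :: "'a::comm_ring_1 \<Rightarrow> nat \<Rightarrow> nat \<Rightarrow> 'a" where
  "neg_binomial_partial u l M = (\<Sum>m<M. of_nat ((l + m - 1) choose m) * u ^ m)"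

lemma neg_binomial_partial_0: "1 \<le> M \<Longrightarrow> neg_binomial_partial u 0 M = 1"
  by (induction M rule: dec_induct) (simp_all add: neg_binomial_partial_def binomial_eq_0)

lemma neg_binomial_partial_Suc:
  assumes "1 \<le> M"
  shows "(1 - u) * neg_binomial_partial u (Suc l) M
    = neg_binomial_partial u l M - of_nat ((l + M - 1) choose (M - 1)) * u ^ M"
  using assms
proof (induction M rule: dec_induct)
  case (step M)
  have pascal: "(l + M choose M) = (l + M - 1 choose M) + (l + M - 1 choose (M - 1))"
    using step(1) choose_reduce_nat[of "l + M" M] by simp
  have "(1 - u) * neg_binomial_partial u (Suc l) (Suc M)
      = (1 - u) * neg_binomial_partial u (Suc l) M + (1 - u) * of_nat (l + M choose M) * u ^ M"
    by (simp add: neg_binomial_partial_def algebra_simps)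
  also have "\<dots> = neg_binomial_partial u l M + of_nat (l + M - 1 choose M) * u ^ M
      - of_nat (l + M choose M) * u ^ Suc M"
    using step(3) pascal by (simp add: algebra_simps)
  finally show ?case using step(1) by (simp add: neg_binomial_partial_def)
qed (simp add: neg_binomial_partial_def algebra_simps)

lemma (in nonarch_abs) nv_neg_binomial_partial_error:
  assumes "nv u \<le> 1" "nv (1 - u) \<le> 1"
  shows "nv ((1 - u) ^ l * neg_binomial_partial u l M - 1) \<le> nv u ^ M"
proof (cases "M = 0")
  case False
  then have M: "1 \<le> M" by simp
  show ?thesis
  proof (induction l)
    case (Suc l)
    let ?c = "(1 - u) ^ l * of_nat ((l + M - 1) choose (M - 1))"
    have "(1 - u) ^ Suc l * neg_binomial_partial u (Suc l) M - 1
        = (1 - u) ^ l * ((1 - u) * neg_binomial_partial u (Suc l) M) - 1"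
      by (simp add: mult_ac)
    also have "\<dots> = ((1 - u) ^ l * neg_binomial_partial u l M - 1) - ?c * u ^ M"
      unfolding neg_binomial_partial_Suc[OF M] by (simp add: algebra_simps)
    finally have eq: "(1 - u) ^ Suc l * neg_binomial_partial u (Suc l) M - 1
        = ((1 - u) ^ l * neg_binomial_partial u l M - 1) - ?c * u ^ M" .
    have "nv ?c \<le> 1"
      using assms nv_of_nat_le_1 by (simp add: nv_mult nv_power mult_le_one power_le_one nv_nonneg)
    then show ?case
      unfolding eq using Suc by (simp add: nv_diff_le nv_mult_le_one_left nv_power)
  qed (simp add: neg_binomial_partial_0[OF M] nv_nonneg)
qed (simp add: neg_binomial_partial_def)

lemma (in nonarch_abs) nv_neg_binomial_partial_sub_inverse:
  assumes "nv u < 1"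
  shows "nv (neg_binomial_partial u l M - 1 / (1 - u) ^ l) \<le> nv u ^ M"
proof -
  have one_minus_u: "nv (1 - u) = 1"
    using assms by (intro nv_eq_1_if_nv_diff_1_lt_1) simp
  then have "1 - u \<noteq> 0" by auto
  then have "neg_binomial_partial u l M - 1 / (1 - u) ^ l
      = ((1 - u) ^ l * neg_binomial_partial u l M - 1) / (1 - u) ^ l"
    by (simp add: field_simps)
  then show ?thesis
    using nv_neg_binomial_partial_error[of u l M] assms one_minus_u
    by (simp add: nv_divide nv_power)
qed

lemma gbinomial_of_nat_minus_1:
  "((of_nat (l + m) - 1 :: 'a::field_char_0) gchoose m) = of_nat ((l + m - 1) choose m)"
proof (cases "l + m")
  case (Suc j)
  then have "(of_nat (l + m) - 1 :: 'a) = of_nat (l + m - 1)" by (simp del: of_nat_add)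
  then show ?thesis by (simp add: binomial_gbinomial)
qed simp

definition qbern_coeff :: "'a::field_char_0 \<Rightarrow> nat \<Rightarrow> nat \<Rightarrow> nat \<Rightarrow> 'a" where
  "qbern_coeff q K l m = ((of_nat (l + m) - 1) gchoose m) * of_nat (K choose l)
     * (-1) ^ (l + m) * q ^ l * (q - 1) ^ m"

lemma qbern_coeff_mult_power:
  "qbern_coeff q K l m * a ^ (l + m + k)
    = a ^ k * (of_nat (K choose l) * (- q * a) ^ l) * (of_nat ((l + m - 1) choose m) * ((1 - q) * a) ^ m)"
proof -
  have "(1 - q) ^ m = (-1) ^ m * (q - 1) ^ m"
    by (metis mult_minus1 minus_diff_eq power_mult_distrib)
  then show ?thesis
    unfolding qbern_coeff_def gbinomial_of_nat_minus_1 power_mult_distrib power_minus[of q] power_add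
    by (simp only: mult_ac)
qed

lemma qbern_series_partial_sum:
  "(\<Sum>m<M. \<Sum>l=0..K. qbern_coeff q K l m * a ^ (l + m + k))
    = a ^ k * (\<Sum>l=0..K. of_nat (K choose l) * (- q * a) ^ l * neg_binomial_partial ((1 - q) * a) l M)"
  unfolding qbern_coeff_mult_power neg_binomial_partial_def
  by (subst sum.swap) (simp add: sum_distrib_left mult_ac)

lemma qint_one_minus_power:
  assumes "q \<noteq> 0"
  shows "qint q (1 - int x) ^ K = (\<Sum>l=0..K. of_nat (K choose l) * (- q * qnat q x) ^ l / (q ^ x) ^ l)"
proof -
  have eq: "qint q (1 - int x) = (- q * qnat q x) / q ^ x + 1"
    using qint_one_minus[OF assms] by simp
  show ?thesis unfolding eq binomial_ring power_divide by (simp add: atLeast0AtMost)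
qed

context q_fermionic
begin

text \<open>With u = (1 - q)[x]_q we have q^x = 1 - u, so the M-th partial sum replaces each (1 - u)^(-l)
  in the binomial expansion of [1 - x]_q^K by its truncated negative binomial series.\<close>
lemma nv_qbern_series_truncation:
  "nv ((\<Sum>m<M. \<Sum>l=0..K. qbern_coeff q K l m * qnat q x ^ (l + m + k))
       - qnat q x ^ k * qint q (1 - int x) ^ K) \<le> nv (1 - q) ^ M"
proof -
  define a where "a = qnat q x"
  define u where "u = (1 - q) * a"
  have qx: "q ^ x = 1 - u" unfolding u_def a_def using one_minus_q_mult_qnat[of q x] by simp
  have nv_a: "nv a \<le> 1" unfolding a_def by (rule nv_qnat)
  have nv_u: "nv u \<le> nv (1 - q)"
    unfolding u_def using nv_mult_le_one_right[OF order_refl nv_a] .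
  have "q \<noteq> 0" using nv_q by auto
  then have "(\<Sum>m<M. \<Sum>l=0..K. qbern_coeff q K l m * a ^ (l + m + k)) - a ^ k * qint q (1 - int x) ^ K
      = a ^ k * (\<Sum>l=0..K. (of_nat (K choose l) * (- q * a) ^ l)
                  * (neg_binomial_partial u l M - 1 / (1 - u) ^ l))"
    unfolding qbern_series_partial_sum qint_one_minus_power[OF \<open>q \<noteq> 0\<close>] a_def[symmetric] qx u_def
    by (simp add: sum_subtractf algebra_simps flip: sum_distrib_left)
  also have "nv \<dots> \<le> nv u ^ M"
  proof (rule nv_mult_le_one_left)
    show "nv (a ^ k) \<le> 1" using nv_a by (simp add: nv_power power_le_one nv_nonneg)
    have "nv (of_nat (K choose l) * (- q * a) ^ l * (neg_binomial_partial u l M - 1 / (1 - u) ^ l))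
        \<le> nv u ^ M" for l
    proof (rule nv_mult_le_one_left)
      show "nv (of_nat (K choose l) * (- q * a) ^ l) \<le> 1"
        using nv_a nv_q nv_of_nat_le_1 by (simp add: nv_mult nv_power mult_le_one power_le_one nv_nonneg)
      show "nv (neg_binomial_partial u l M - 1 / (1 - u) ^ l) \<le> nv u ^ M"
        using nv_u nv_1_minus_q_lt_1 by (intro nv_neg_binomial_partial_sub_inverse) simp
    qed
    then show "nv (\<Sum>l=0..K. of_nat (K choose l) * (- q * a) ^ l
        * (neg_binomial_partial u l M - 1 / (1 - u) ^ l)) \<le> nv u ^ M"
      by (intro nv_sum_le) (simp_all add: nv_nonneg)
  qed
  also have "\<dots> \<le> nv (1 - q) ^ M" using nv_u by (simp add: power_mono nv_nonneg)
  finally show ?thesis unfolding a_def .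
qed

theorem ferm_int_qbern_series:
  fixes K k :: nat
  defines "F \<equiv> \<lambda>x. qnat q x ^ k * qint q (1 - int x) ^ K"
  shows "ferm_exists p nv F
    \<and> nv_sums nv (\<lambda>m. \<Sum>l=0..K. qbern_coeff q K l m * qEuler p nv (l + m + k) q) (ferm_int p nv F)"
proof -
  define G where "G M x = (\<Sum>m<M. \<Sum>l=0..K. qbern_coeff q K l m * qnat q x ^ (l + m + k))" for M x
  define s where "s M = (\<Sum>m<M. \<Sum>l=0..K. qbern_coeff q K l m * qEuler p nv (l + m + k) q)" for M
  have "\<exists>L. nv_tendsto nv (\<lambda>N. ferm_sum p N F) L \<and> nv_tendsto nv s L"
  proof (rule nv_tendsto_uniform_approx)
    show "nv_tendsto nv (\<lambda>N. ferm_sum p N (G M)) (s M)" for M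
      unfolding G_def s_def ferm_sum_sum ferm_sum_mult_left
      by (intro nv_tendsto_sum nv_tendsto_mult_left qEuler_limit)
    show "nv (ferm_sum p N F - ferm_sum p N (G M)) \<le> nv (1 - q) ^ M" for M N
      unfolding ferm_sum_diff unfolding ferm_sum_def F_def G_def
      using nv_qbern_series_truncation nv_minus_commute
      by (intro nv_sum_le) (simp_all add: nv_mult nv_power nv_nonneg)
    show "(\<lambda>M. nv (1 - q) ^ M) \<longlonglongrightarrow> 0"
      using nv_1_minus_q_lt_1 by (intro LIMSEQ_power_zero) (simp add: nv_nonneg)
  qed
  then obtain L where "nv_tendsto nv (\<lambda>N. ferm_sum p N F) L" "nv_tendsto nv s L" by blast
  then show ?thesis
    unfolding ferm_exists_iff nv_sums_def s_def by (auto simp: ferm_int_eqI)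
qed

end

theorem mainTheorem6:
  fixes p :: nat and nv :: "'a::field_char_0 \<Rightarrow> real" and q :: 'a and k n :: nat
  assumes "prime p" and "odd p"
    and "Cp_like p nv"
    and "nv (1 - q) < real p powr (- 1 / (real p - 1))"
    and "k \<le> n"
  shows "ferm_exists p nv (\<lambda>x. qbern k n q x / of_nat (n choose k)) \<and>
         nv_sums nv
           (\<lambda>m. \<Sum>l=0..n-k. ((of_nat (l + m) - 1 :: 'a) gchoose m) * of_nat ((n - k) choose l)
                   * (-1) ^ (l + m) * q ^ l * (q - 1) ^ m * qEuler p nv (l + m + k) q)
           (ferm_int p nv (\<lambda>x. qbern k n q x / of_nat (n choose k)))"
proof -
  have p_gt_1: "1 < real p" using prime_gt_1_nat[OF assms(1)] by simp
  then have "real p powr (- 1 / (real p - 1)) < 1"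
    by (intro powr_less_one) (simp_all add: divide_neg_pos)
  with assms(4) have "nv (1 - q) < 1" by linarith
  moreover have "complete_nonarch_abs nv" and "nv (of_nat p) = 1 / real p"
    using assms(3) unfolding Cp_like_def complete_nonarch_abs_def nonarch_abs_def
      complete_nonarch_abs_axioms_def by blast+
  ultimately interpret q_fermionic nv p q
    using assms(2) p_gt_1 by (simp add: q_fermionic_def q_fermionic_axioms_def)
  have "(\<lambda>x. qbern k n q x / of_nat (n choose k)) = (\<lambda>x. qnat q x ^ k * qint q (1 - int x) ^ (n - k))"
    using assms(5) by (simp add: qbern_def qnat_def)
  then show ?thesis
    using ferm_int_qbern_series[of k "n - k"] by (simp add: qbern_coeff_def)
qed

end
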